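(* There is $d_0$ such that the following holds for all $d\geq d_0$. Let $G$ be a graph on $n$ vertices with average degree $d$. Then there exists a non-empty bipartite subgraph $G'$ of $G$ with parts $X$ and $Y$ such that $e(G')\geq|X|\cdot\frac{\Delta(G')}{80}$ and $e(G')\geq|Y|\cdot\frac{d}{10\log n}$.
   Context: $e(G')$ is the number of edges and $\Delta(G')$ the maximum degree of $G'$. Logarithms are base $2$. *)

theory Defs
  imports Complex_Main
begin

definition simple_graph :: "'a set \<Rightarrow> 'a set set \<Rightarrow> bool" where
  "simple_graph V E \<longleftrightarrow> finite V \<and> (\<forall>e\<in>E. e \<subseteq> V \<and> card e = 2)"

definition degree :: "'a set set \<Rightarrow> 'a \<Rightarrow> nat" where
  "degree E v = card {e\<in>E. v \<in> e}"

definition max_degree :: "'a set \<Rightarrow> 'a set set \<Rightarrow> nat" where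
  "max_degree V E = Max (degree E ` V)"

definition bipartite_subgraph ::
  "'a set \<Rightarrow> 'a set set \<Rightarrow> 'a set \<Rightarrow> 'a set \<Rightarrow> 'a set set \<Rightarrow> bool" where
  "bipartite_subgraph V E X Y E' \<longleftrightarrow>
     X \<subseteq> V \<and> Y \<subseteq> V \<and> X \<inter> Y = {} \<and> E' \<subseteq> E \<and>
     (\<forall>e\<in>E'. \<exists>x\<in>X. \<exists>y\<in>Y. e = {x, y})"

definition average_degree :: "'a set \<Rightarrow> 'a set set \<Rightarrow> real" where
  "average_degree V E = 2 * real (card E) / real (card V)"

end

theory Submission
  imports Defs "HOL-Library.Log_Nat"
begin

(* Fix a cut containing at least half of the edges and orient its edges from one side to the
   other. Call an arc tail-heavy if the out-degree of its tail is at least the in-degree of its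
   head; after reversing all arcs if necessary, at least half of the arcs are tail-heavy. Tails
   keeping less than a fifth of their arcs as tail-heavy arcs carry at most a fifth of all arcs, so
   the other tails carry at least 3/10 of the arcs through tail-heavy arcs. Grouping these tails by
   the base-16 logarithm of their out-degree, some group X carries a 1/log_16 n share of them. In
   the bipartite graph of the tail-heavy arcs leaving X, all degrees are below 16^k, where 16^(k-1)
   is a lower bound for the out-degrees in X, while every vertex of X keeps degree at least
   16^(k-1)/5. *)

definition out_degree :: "('a \<times> 'a) set \<Rightarrow> 'a \<Rightarrow> nat" where
  "out_degree R x = card {y. (x, y) \<in> R}"

definition in_degree :: "('a \<times> 'a) set \<Rightarrow> 'a \<Rightarrow> nat" where
  "in_degree R y = card {x. (x, y) \<in> R}"

lemma out_degree_converse [simp]: "out_degree (R\<inverse>) x = in_degree R x"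
  unfolding out_degree_def in_degree_def by simp

lemma in_degree_converse [simp]: "in_degree (R\<inverse>) y = out_degree R y"
  unfolding out_degree_def in_degree_def by simp

lemma card_converse: "card (R\<inverse>) = card R"
proof -
  have "R\<inverse> = prod.swap ` R" by auto
  then show ?thesis by (simp add: card_image)
qed

lemma finite_successors: "finite R \<Longrightarrow> finite {y. (x, y) \<in> R}"
  by (rule finite_subset[of _ "snd ` R"]) force+

lemma out_degree_mono: "finite S \<Longrightarrow> R \<subseteq> S \<Longrightarrow> out_degree R x \<le> out_degree S x"
  unfolding out_degree_def by (intro card_mono finite_successors) auto

lemma in_degree_mono: "finite S \<Longrightarrow> R \<subseteq> S \<Longrightarrow> in_degree R y \<le> in_degree S y"
  using out_degree_mono[of "S\<inverse>" "R\<inverse>" y] by simp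

lemma out_degree_pos: "finite R \<Longrightarrow> x \<in> Domain R \<Longrightarrow> 0 < out_degree R x"
  unfolding out_degree_def by (auto simp: card_gt_0_iff finite_successors)

lemma card_eq_sum_out_degree:
  assumes "finite R" "finite P" "Domain R \<subseteq> P"
  shows "card R = (\<Sum>x\<in>P. out_degree R x)"
proof -
  have R: "R = (\<Union>x\<in>P. Pair x ` {y. (x, y) \<in> R})" using assms(3) by auto
  have "card R = (\<Sum>x\<in>P. card (Pair x ` {y. (x, y) \<in> R}))"
    by (subst R, rule card_UN_disjoint) (use assms in \<open>auto simp: finite_successors\<close>)
  then show ?thesis unfolding out_degree_def by (simp add: card_image inj_on_def)
qed

definition tail_heavy_arcs :: "('a \<times> 'a) set \<Rightarrow> ('a \<times> 'a) set" where
  "tail_heavy_arcs R = {(x, y) \<in> R. in_degree R y \<le> out_degree R x}"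

lemma tail_heavy_arcs_subset: "tail_heavy_arcs R \<subseteq> R"
  unfolding tail_heavy_arcs_def by auto

lemma card_le_tail_heavy_arcs:
  assumes "finite R"
  shows "card R \<le> card (tail_heavy_arcs R) + card (tail_heavy_arcs (R\<inverse>))"
proof -
  have "R \<subseteq> tail_heavy_arcs R \<union> (tail_heavy_arcs (R\<inverse>))\<inverse>"
    unfolding tail_heavy_arcs_def by auto
  then have "card R \<le> card (tail_heavy_arcs R \<union> (tail_heavy_arcs (R\<inverse>))\<inverse>)"
    using assms tail_heavy_arcs_subset by (intro card_mono) (auto intro: finite_subset)
  also have "\<dots> \<le> card (tail_heavy_arcs R) + card (tail_heavy_arcs (R\<inverse>))"
    using card_Un_le card_converse by metis
  finally show ?thesis .
qed

lemma dense_tails_carry_arcs: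
  assumes "finite R" "F \<subseteq> R" "card R \<le> 2 * card F"
  shows "3 * card R \<le>
    10 * (\<Sum>x\<in>{x \<in> Domain F. out_degree R x \<le> 5 * out_degree F x}. out_degree F x)"
    (is "_ \<le> 10 * sum _ ?Good")
proof -
  have finF: "finite F" using assms finite_subset by blast
  have finD: "finite (Domain F)" using finF by (simp add: finite_Domain)
  let ?Bad = "Domain F - ?Good"
  have "5 * (\<Sum>x\<in>?Bad. out_degree F x) \<le> (\<Sum>x\<in>?Bad. out_degree R x)"
    by (subst sum_distrib_left) (intro sum_mono, auto)
  also have "\<dots> \<le> (\<Sum>x\<in>Domain R. out_degree R x)"
    using assms Domain_mono[OF assms(2)] by (intro sum_mono2) (auto simp: finite_Domain)
  also have "\<dots> = card R" using card_eq_sum_out_degree[OF assms(1) _ order_refl] assms(1) by (simp add: finite_Domain)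
  finally have bad: "5 * (\<Sum>x\<in>?Bad. out_degree F x) \<le> card R" .
  have "card F = (\<Sum>x\<in>?Bad. out_degree F x) + (\<Sum>x\<in>?Good. out_degree F x)"
    using card_eq_sum_out_degree[OF finF finD] sum.subset_diff[OF _ finD, of ?Good] by auto
  then show ?thesis using bad assms(3) by linarith
qed

lemma sum_le_card_mult_fibre_sum:
  fixes f :: "'a \<Rightarrow> nat"
  assumes "finite A" "finite C" "C \<noteq> {}" "c ` A \<subseteq> C"
  shows "\<exists>k\<in>C. sum f A \<le> card C * sum f {x \<in> A. c x = k}"
proof -
  define g where "g k = sum f {x \<in> A. c x = k}" for k
  have "Max (g ` C) \<in> g ` C" using assms(2,3) by (intro Max_in) auto
  then obtain k where k: "k \<in> C" "g k = Max (g ` C)" by force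
  then have max: "g j \<le> g k" if "j \<in> C" for j
    using that assms(2) by simp
  have "sum f A = (\<Sum>j\<in>C. g j)"
    unfolding g_def using assms by (intro sum.group[symmetric]) auto
  also have "\<dots> \<le> card C * g k" using sum_bounded_above[of C g "g k"] max by simp
  finally show ?thesis using k(1) unfolding g_def by blast
qed

lemma exists_heavy_scale:
  fixes h f :: "'a \<Rightarrow> nat"
  assumes "finite A" "0 < N" "\<And>x. x \<in> A \<Longrightarrow> 0 < h x \<and> h x \<le> N"
  obtains k where "0 < k"
    "sum f A \<le> floorlog 16 N * sum f {x \<in> A. floorlog 16 (h x) = k}"
proof -
  have "floorlog 16 (h x) \<in> {1..floorlog 16 N}" if "x \<in> A" for x
  proof -
    have "0 < h x" "h x \<le> N" using assms(3)[OF that] by auto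
    then show ?thesis by (simp add: floorlog_mono) (simp add: floorlog_def)
  qed
  then have "(\<lambda>x. floorlog 16 (h x)) ` A \<subseteq> {1..floorlog 16 N}" by auto
  moreover have "{1..floorlog 16 N} \<noteq> {}" using assms(2) by (simp add: floorlog_def)
  ultimately obtain k where "k \<in> {1..floorlog 16 N}"
    "sum f A \<le> card {1..floorlog 16 N} * sum f {x \<in> A. floorlog 16 (h x) = k}"
    using sum_le_card_mult_fibre_sum[OF assms(1) finite_atLeastAtMost] by blast
  then show ?thesis using that[of k] by simp
qed

lemma card_restrict_tails:
  assumes "finite R" "finite X"
  shows "card {(x, y) \<in> R. x \<in> X} = (\<Sum>x\<in>X. out_degree R x)"
proof -
  have "finite {(x, y) \<in> R. x \<in> X}" by (rule finite_subset[OF _ assms(1)]) auto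
  then have "card {(x, y) \<in> R. x \<in> X} = (\<Sum>x\<in>X. out_degree {(x, y) \<in> R. x \<in> X} x)"
    by (rule card_eq_sum_out_degree[OF _ assms(2)]) auto
  also have "\<dots> = (\<Sum>x\<in>X. out_degree R x)" unfolding out_degree_def by simp
  finally show ?thesis .
qed

lemma degree_le_restrict_tail_heavy_arcs:
  assumes "finite R" "\<And>x. x \<in> X \<Longrightarrow> out_degree R x \<le> D"
  shows "out_degree {(x, y) \<in> tail_heavy_arcs R. x \<in> X} v \<le> D"
    and "in_degree {(x, y) \<in> tail_heavy_arcs R. x \<in> X} v \<le> D"
proof -
  let ?R' = "{(x, y) \<in> tail_heavy_arcs R. x \<in> X}"
  have R'R: "?R' \<subseteq> R" using tail_heavy_arcs_subset by blast
  show "out_degree ?R' v \<le> D"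
  proof (cases "v \<in> X")
    case True
    then show ?thesis using out_degree_mono[OF assms(1) R'R] assms(2) le_trans by blast
  next
    case False
    then show ?thesis by (simp add: out_degree_def)
  qed
  show "in_degree ?R' v \<le> D"
  proof (cases "v \<in> Range ?R'")
    case True
    then obtain x where x: "(x, v) \<in> tail_heavy_arcs R" "x \<in> X" by auto
    have "in_degree ?R' v \<le> in_degree R v" using in_degree_mono[OF assms(1) R'R] .
    also have "\<dots> \<le> out_degree R x" using x(1) by (simp add: tail_heavy_arcs_def)
    also have "\<dots> \<le> D" using assms(2) x(2) .
    finally show ?thesis .
  next
    case False
    then have "{x. (x, v) \<in> ?R'} = {}" by blast
    then show ?thesis unfolding in_degree_def by (subst \<open>{x. (x, v) \<in> ?R'} = {}\<close>) simp
  qed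
qed

lemma tail_heavy_subrelation_bounded_degree:
  fixes R :: "('a \<times> 'a) set"
  assumes finR: "finite R" and "R \<noteq> {}"
    and heavy: "card R \<le> 2 * card (tail_heavy_arcs R)"
    and bounded: "\<And>x. out_degree R x \<le> N"
  obtains R' D where "R' \<subseteq> R" "\<And>x. out_degree R' x \<le> D" "\<And>y. in_degree R' y \<le> D"
    "card (Domain R') * D \<le> 80 * card R'" "3 * card R \<le> 10 * floorlog 16 N * card R'"
proof -
  define F where "F = tail_heavy_arcs R"
  define Good where "Good = {x \<in> Domain F. out_degree R x \<le> 5 * out_degree F x}"
  have FR: "F \<subseteq> R" unfolding F_def by (rule tail_heavy_arcs_subset)
  have finF: "finite F" using finR FR finite_subset by blast
  have finGood: "finite Good" unfolding Good_def using finF by (simp add: finite_Domain)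
  have pos: "0 < out_degree R x" if "x \<in> Domain F" for x
    using that FR finR by (intro out_degree_pos) auto
  have "F \<noteq> {}" using heavy \<open>R \<noteq> {}\<close> finR unfolding F_def by auto
  then obtain x0 where "x0 \<in> Domain F" by auto
  then have "0 < N" using pos[of x0] bounded[of x0] by linarith
  then obtain k where "0 < k" and pigeonhole: "sum (out_degree F) Good \<le>
      floorlog 16 N * sum (out_degree F) {x \<in> Good. floorlog 16 (out_degree R x) = k}"
    using exists_heavy_scale[OF finGood, of N "out_degree R"] pos bounded unfolding Good_def by blast
  define X where "X = {x \<in> Good. floorlog 16 (out_degree R x) = k}"
  define R' where "R' = {(x, y) \<in> F. x \<in> X}"
  have X: "16 ^ (k - 1) \<le> out_degree R x \<and> out_degree R x < 16 ^ k \<and>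
      out_degree R x \<le> 5 * out_degree F x" if "x \<in> X" for x
    using that floorlog_bounds[OF pos, of x 16] unfolding X_def Good_def by auto
  have finX: "finite X" unfolding X_def using finGood by simp
  have card_R': "card R' = sum (out_degree F) X"
    unfolding R'_def by (rule card_restrict_tails[OF finF finX])
  show ?thesis
  proof (rule that[of R' "16 ^ k"])
    show "R' \<subseteq> R" unfolding R'_def using FR by auto
    have "out_degree R x \<le> 16 ^ k" if "x \<in> X" for x using X[OF that] by simp
    note bounds = degree_le_restrict_tail_heavy_arcs[OF finR this]
    show "out_degree R' x \<le> 16 ^ k" for x unfolding R'_def F_def by (rule bounds(1))
    show "in_degree R' y \<le> 16 ^ k" for y unfolding R'_def F_def by (rule bounds(2))
    have "card (Domain R') \<le> card X" unfolding R'_def using finX by (intro card_mono) auto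
    then have "card (Domain R') * 16 ^ k \<le> 16 * (card X * 16 ^ (k - 1))"
      using \<open>0 < k\<close> by (cases k) auto
    also have "\<dots> \<le> 16 * (\<Sum>x\<in>X. 5 * out_degree F x)"
      using X sum_mono[of X "\<lambda>_. 16 ^ (k - 1)" "\<lambda>x. 5 * out_degree F x"] by force
    also have "\<dots> = 80 * card R'" by (simp add: card_R' sum_distrib_left)
    finally show "card (Domain R') * 16 ^ k \<le> 80 * card R'" .
    have "3 * card R \<le> 10 * sum (out_degree F) Good"
      using dense_tails_carry_arcs[OF finR FR heavy[folded F_def]] unfolding Good_def .
    then show "3 * card R \<le> 10 * floorlog 16 N * card R'"
      using pigeonhole card_R' unfolding X_def by simp
  qed
qed

lemma finite_edges: "simple_graph V E \<Longrightarrow> finite E"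
  unfolding simple_graph_def by (meson Pow_iff finite_Pow_iff finite_subset subsetI)

definition arcs :: "'a set set \<Rightarrow> ('a \<times> 'a) set" where
  "arcs E = {(x, y). {x, y} \<in> E}"

lemma arcs_subset: "simple_graph V E \<Longrightarrow> arcs E \<subseteq> V \<times> V"
  unfolding simple_graph_def arcs_def by blast

lemma finite_arcs: "simple_graph V E \<Longrightarrow> finite (arcs E)"
  using arcs_subset finite_subset by (fastforce simp: simple_graph_def)

lemma arcs_irrefl: "simple_graph V E \<Longrightarrow> (x, y) \<in> arcs E \<Longrightarrow> x \<noteq> y"
  unfolding simple_graph_def arcs_def by fastforce

lemma card_arcs:
  assumes G: "simple_graph V E"
  shows "card (arcs E) = 2 * card E"
proof -
  have arcs_eq: "arcs E = (\<Union>e\<in>E. {(x, y). {x, y} = e})"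
    unfolding arcs_def by auto
  have two: "card {(x, y). {x, y} = e} = 2" if "e \<in> E" for e
  proof -
    have "card e = 2" using that G by (simp add: simple_graph_def)
    then obtain a b where e: "e = {a, b}" "a \<noteq> b" by (meson card_2_iff)
    then have "{(x, y). {x, y} = e} = {(a, b), (b, a)}" by (auto simp: doubleton_eq_iff)
    then show ?thesis using e by simp
  qed
  have fin: "finite {(x, y). {x, y} = e}" if "e \<in> E" for e
    using two[OF that] by (intro card_ge_0_finite) simp
  have "card (arcs E) = (\<Sum>e\<in>E. card {(x, y). {x, y} = e})"
    unfolding arcs_eq using finite_edges[OF G] fin by (intro card_UN_disjoint) auto
  also have "\<dots> = 2 * card E" using two by simp
  finally show ?thesis .
qed

lemma two_card_edges_le:
  assumes G: "simple_graph V E"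
  shows "2 * card E \<le> card V ^ 2"
proof -
  have "finite V" using G by (simp add: simple_graph_def)
  then have "card (arcs E) \<le> card (V \<times> V)" using arcs_subset[OF G] by (intro card_mono) auto
  then show ?thesis using card_arcs[OF G] by (simp add: card_cartesian_product power2_eq_square)
qed

definition cut_arcs :: "'a set set \<Rightarrow> 'a set \<Rightarrow> ('a \<times> 'a) set" where
  "cut_arcs E A = {(x, y) \<in> arcs E. x \<in> A \<and> y \<notin> A}"

lemma converse_cut_arcs: "(cut_arcs E A)\<inverse> = cut_arcs E (- A)"
  unfolding cut_arcs_def arcs_def by (auto simp: insert_commute)

lemma cut_arcs_subset: "cut_arcs E A \<subseteq> A \<times> - A"
  unfolding cut_arcs_def by auto

lemma card_separating_subsets:
  assumes "finite V" "x \<in> V" "y \<in> V" "x \<noteq> y"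
  shows "card {A \<in> Pow V. x \<in> A \<and> y \<notin> A} = 2 ^ (card V - 2)"
proof -
  have "bij_betw (insert x) (Pow (V - {x, y})) {A \<in> Pow V. x \<in> A \<and> y \<notin> A}"
  proof (rule bij_betw_byWitness[where f' = "\<lambda>A. A - {x}"])
  qed (use assms in auto)
  then have "card {A \<in> Pow V. x \<in> A \<and> y \<notin> A} = card (Pow (V - {x, y}))"
    by (simp add: bij_betw_same_card)
  also have "\<dots> = 2 ^ (card V - 2)" using assms by (simp add: card_Pow card_Diff_subset)
  finally show ?thesis .
qed

lemma sum_card_cut_arcs:
  assumes G: "simple_graph V E"
  shows "(\<Sum>A\<in>Pow V. card (cut_arcs E A)) = card (arcs E) * 2 ^ (card V - 2)"
proof -
  have finV: "finite V" using G by (simp add: simple_graph_def)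
  have cut_eq: "cut_arcs E A = {p \<in> arcs E. fst p \<in> A \<and> snd p \<notin> A}" for A
    unfolding cut_arcs_def by auto
  have "(\<Sum>A\<in>Pow V. card (cut_arcs E A)) =
        (\<Sum>A\<in>Pow V. \<Sum>p\<in>arcs E. if fst p \<in> A \<and> snd p \<notin> A then 1 else 0)"
    unfolding cut_eq using finite_arcs[OF G] by (simp add: sum.inter_filter[symmetric])
  also have "\<dots> = (\<Sum>p\<in>arcs E. \<Sum>A\<in>Pow V. if fst p \<in> A \<and> snd p \<notin> A then 1 else 0)"
    by (rule sum.swap)
  also have "\<dots> = (\<Sum>p\<in>arcs E. card {A \<in> Pow V. fst p \<in> A \<and> snd p \<notin> A})"
    using finV by (simp add: sum.inter_filter[symmetric])
  also have "\<dots> = (\<Sum>p\<in>arcs E. 2 ^ (card V - 2))"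
  proof (rule sum.cong[OF refl])
    fix p assume "p \<in> arcs E"
    then have "fst p \<in> V" "snd p \<in> V" "fst p \<noteq> snd p"
      using arcs_subset[OF G] arcs_irrefl[OF G, of "fst p" "snd p"] by auto
    then show "card {A \<in> Pow V. fst p \<in> A \<and> snd p \<notin> A} = 2 ^ (card V - 2)"
      by (rule card_separating_subsets[OF finV])
  qed
  finally show ?thesis by simp
qed

lemma exists_large_cut:
  assumes G: "simple_graph V E"
  shows "\<exists>A. card E \<le> 2 * card (cut_arcs E A)"
proof (rule ccontr)
  assume no_cut: "\<not> ?thesis"
  have small: "4 * card (cut_arcs E A) < card (arcs E)" for A
  proof -
    have "\<not> card E \<le> 2 * card (cut_arcs E A)" using no_cut by blast
    then show ?thesis using card_arcs[OF G] by linarith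
  qed
  then have "arcs E \<noteq> {}" by fastforce
  then obtain x y where "(x, y) \<in> arcs E" by auto
  then have "x \<in> V" "y \<in> V" "x \<noteq> y" using arcs_subset[OF G] arcs_irrefl[OF G] by auto
  moreover have finV: "finite V" using G by (simp add: simple_graph_def)
  ultimately have "card {x, y} \<le> card V" by (intro card_mono) auto
  then obtain m where m: "card V = m + 2" using \<open>x \<noteq> y\<close> by (metis card_2_iff le_Suc_ex add.commute)
  have "4 * (card (arcs E) * 2 ^ (card V - 2)) = (\<Sum>A\<in>Pow V. 4 * card (cut_arcs E A))"
    unfolding sum_card_cut_arcs[OF G, symmetric] by (rule sum_distrib_left)
  also have "\<dots> < (\<Sum>A\<in>Pow V. card (arcs E))"
    using finV small by (intro sum_strict_mono) auto
  also have "\<dots> = card (arcs E) * 2 ^ card V" using finV by (simp add: card_Pow)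
  finally show False using m by simp
qed

lemma exists_tail_heavy_cut:
  assumes G: "simple_graph V E"
  obtains A R where "R \<subseteq> cut_arcs E A" "finite R" "card E \<le> 2 * card R"
    "card R \<le> 2 * card (tail_heavy_arcs R)"
proof -
  obtain A where A: "card E \<le> 2 * card (cut_arcs E A)" using exists_large_cut[OF G] by blast
  have fin: "finite (cut_arcs E A)"
    using finite_arcs[OF G] by (rule finite_subset[rotated]) (auto simp: cut_arcs_def)
  then have split: "card (cut_arcs E A) \<le>
      card (tail_heavy_arcs (cut_arcs E A)) + card (tail_heavy_arcs ((cut_arcs E A)\<inverse>))"
    by (rule card_le_tail_heavy_arcs)
  show ?thesis
  proof (cases "card (cut_arcs E A) \<le> 2 * card (tail_heavy_arcs (cut_arcs E A))")
    case True
    then show ?thesis using A fin by (intro that[of "cut_arcs E A" A]) auto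
  next
    case False
    have card_eq: "card (cut_arcs E (- A)) = card (cut_arcs E A)"
      by (simp flip: converse_cut_arcs add: card_converse)
    show ?thesis
    proof (rule that[of "cut_arcs E (- A)" "- A"])
      show "finite (cut_arcs E (- A))" using fin by (simp flip: converse_cut_arcs)
      show "card E \<le> 2 * card (cut_arcs E (- A))" using A card_eq by simp
      show "card (cut_arcs E (- A)) \<le> 2 * card (tail_heavy_arcs (cut_arcs E (- A)))"
        using False split card_eq by (simp add: converse_cut_arcs)
    qed simp
  qed
qed

definition edges_of_arcs :: "('a \<times> 'a) set \<Rightarrow> 'a set set" where
  "edges_of_arcs R = (\<lambda>(x, y). {x, y}) ` R"

lemma edges_of_arcs_converse [simp]: "edges_of_arcs (R\<inverse>) = edges_of_arcs R"
  unfolding edges_of_arcs_def by (force simp: insert_commute)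

lemma card_edges_of_arcs:
  assumes "R \<subseteq> A \<times> - A"
  shows "card (edges_of_arcs R) = card R"
  unfolding edges_of_arcs_def
proof (rule card_image, rule inj_onI, clarify)
  fix a b c d assume "(a, b) \<in> R" "(c, d) \<in> R" "{a, b} = {c, d}"
  then show "a = c \<and> b = d" using assms by (auto simp: doubleton_eq_iff)
qed

lemma degree_edges_of_arcs_tail:
  assumes "R \<subseteq> A \<times> - A" "v \<in> A"
  shows "degree (edges_of_arcs R) v = out_degree R v"
proof -
  have "{e \<in> edges_of_arcs R. v \<in> e} = (\<lambda>y. {v, y}) ` {y. (v, y) \<in> R}"
    using assms unfolding edges_of_arcs_def by force
  moreover have "inj_on (\<lambda>y. {v, y}) {y. (v, y) \<in> R}"
    by (auto simp: inj_on_def doubleton_eq_iff)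
  ultimately show ?thesis unfolding degree_def out_degree_def by (simp add: card_image)
qed

lemma degree_edges_of_arcs_le:
  assumes "R \<subseteq> A \<times> - A" "\<And>x. out_degree R x \<le> D" "\<And>y. in_degree R y \<le> D"
  shows "degree (edges_of_arcs R) v \<le> D"
proof (cases "v \<in> A")
  case True
  then show ?thesis using degree_edges_of_arcs_tail assms(1,2) by metis
next
  case False
  have "R\<inverse> \<subseteq> (- A) \<times> - (- A)" using assms(1) by auto
  then have "degree (edges_of_arcs (R\<inverse>)) v = out_degree (R\<inverse>) v"
    by (rule degree_edges_of_arcs_tail) (use False in simp)
  then show ?thesis using assms(3) by simp
qed

lemma bipartite_subgraph_edges_of_arcs:
  assumes G: "simple_graph V E" and R: "R \<subseteq> cut_arcs E A"
  shows "bipartite_subgraph V E (Domain R) (Range R) (edges_of_arcs R)"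
proof -
  have RV: "R \<subseteq> V \<times> V" using R arcs_subset[OF G] unfolding cut_arcs_def by auto
  have RA: "R \<subseteq> A \<times> - A" using R cut_arcs_subset by blast
  have RE: "{x, y} \<in> E" if "(x, y) \<in> R" for x y
    using R that unfolding cut_arcs_def arcs_def by auto
  show ?thesis unfolding bipartite_subgraph_def edges_of_arcs_def
  proof (intro conjI ballI)
    show "Domain R \<subseteq> V" "Range R \<subseteq> V" using RV by auto
    show "Domain R \<inter> Range R = {}" using RA by auto
    show "(\<lambda>(x, y). {x, y}) ` R \<subseteq> E" using RE by auto
    fix e assume "e \<in> (\<lambda>(x, y). {x, y}) ` R"
    then show "\<exists>x\<in>Domain R. \<exists>y\<in>Range R. e = {x, y}" by auto
  qed
qed

lemma max_degree_edges_of_arcs_le: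
  assumes "R \<subseteq> A \<times> - A" "finite R" "R \<noteq> {}"
    and "\<And>x. out_degree R x \<le> D" "\<And>y. in_degree R y \<le> D"
  shows "max_degree (Domain R \<union> Range R) (edges_of_arcs R) \<le> D"
  unfolding max_degree_def using assms
  by (intro Max.boundedI) (auto simp: finite_Domain finite_Range degree_edges_of_arcs_le)

lemma bipartite_subgraph_of_cut_arcs:
  assumes G: "simple_graph V E" and cut: "R \<subseteq> cut_arcs E A" and "R \<noteq> {}"
    and "\<And>x. out_degree R x \<le> D" "\<And>y. in_degree R y \<le> D"
    and "card (Domain R) * D \<le> 80 * card R"
  obtains X Y E' where "bipartite_subgraph V E X Y E'" "E' \<noteq> {}" "card E' = card R"
    "card Y \<le> card V" "card X * max_degree (X \<union> Y) E' \<le> 80 * card E'"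
proof (rule that[of "Domain R" "Range R" "edges_of_arcs R"])
  have RA: "R \<subseteq> A \<times> - A" using cut cut_arcs_subset by blast
  have "R \<subseteq> arcs E" using cut by (auto simp: cut_arcs_def)
  then have "Range R \<subseteq> V" using arcs_subset[OF G] by auto
  have "finite R" using \<open>R \<subseteq> arcs E\<close> finite_arcs[OF G] by (rule finite_subset)
  show "bipartite_subgraph V E (Domain R) (Range R) (edges_of_arcs R)"
    by (rule bipartite_subgraph_edges_of_arcs[OF G cut])
  show "edges_of_arcs R \<noteq> {}" using \<open>R \<noteq> {}\<close> by (simp add: edges_of_arcs_def)
  show card_eq: "card (edges_of_arcs R) = card R" by (rule card_edges_of_arcs[OF RA])
  show "card (Range R) \<le> card V"
    using \<open>Range R \<subseteq> V\<close> G by (intro card_mono) (auto simp: simple_graph_def)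
  have "max_degree (Domain R \<union> Range R) (edges_of_arcs R) \<le> D"
    using max_degree_edges_of_arcs_le[OF RA \<open>finite R\<close> \<open>R \<noteq> {}\<close>] assms(4,5) by blast
  then have "card (Domain R) * max_degree (Domain R \<union> Range R) (edges_of_arcs R)
      \<le> card (Domain R) * D" by (rule mult_le_mono2)
  then show "card (Domain R) * max_degree (Domain R \<union> Range R) (edges_of_arcs R)
      \<le> 80 * card (edges_of_arcs R)"
    using assms(6) card_eq by linarith
qed

lemma average_degree_le_card:
  assumes G: "simple_graph V E" and "V \<noteq> {}"
  shows "average_degree V E \<le> card V"
proof -
  have n_pos: "0 < card V" using assms by (simp add: simple_graph_def card_gt_0_iff)
  have "2 * real (card E) \<le> real (card V) ^ 2"
    using two_card_edges_le[OF G] by (metis of_nat_le_iff of_nat_mult of_nat_numeral of_nat_power)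
  then show ?thesis using n_pos by (simp add: average_degree_def divide_le_eq power2_eq_square)
qed

lemma out_degree_cut_arcs_le:
  assumes G: "simple_graph V E" and "R \<subseteq> cut_arcs E A"
  shows "out_degree R x \<le> card V"
proof -
  have "{y. (x, y) \<in> R} \<subseteq> V" using assms(2) arcs_subset[OF G] by (auto simp: cut_arcs_def)
  then show ?thesis unfolding out_degree_def using G by (intro card_mono) (auto simp: simple_graph_def)
qed

lemma floorlog_16_le_log2:
  assumes "4 \<le> n"
  shows "real (floorlog 16 n) \<le> 3 / 4 * log 2 (real n)"
proof -
  have "log 2 4 \<le> log 2 (real n)" using assms by simp
  moreover have "log 2 (4 :: real) = 2"
    using log_pow_cancel[of 2 2] by simp
  moreover have "log 16 (real n) = log 2 (real n) / 4"
    using log_base_pow[of 2 4 "real n"] by simp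
  moreover have "0 \<le> log 16 (real n)" using assms by simp
  then have "real (floorlog 16 n) \<le> log 16 (real n) + 1"
    using assms by (simp add: floorlog_def)
  ultimately show ?thesis by linarith
qed

lemma cut_density_bound:
  fixes d :: real and n e r m y :: nat
  assumes n: "4 \<le> n" and "y \<le> n" and "0 \<le> d" and d: "real n * d = 2 * real e"
    and "e \<le> 2 * r" and "3 * r \<le> 10 * floorlog 16 n * m"
  shows "real y * d / (10 * log 2 (real n)) \<le> real m"
proof -
  have L_pos: "0 < log 2 (real n)" using n by simp
  have "real (3 * e) \<le> real (20 * floorlog 16 n * m)"
    using assms(5,6) by (intro of_nat_mono) linarith
  also have "\<dots> \<le> 20 * (3 / 4 * log 2 (real n)) * real m"
    using floorlog_16_le_log2[OF n] by (simp add: mult_right_mono)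
  finally have "real e \<le> 5 * (real m * log 2 (real n))" by simp
  moreover have "real y * d \<le> real n * d" using assms(2,3) by (simp add: mult_right_mono)
  ultimately have "real y * d \<le> 10 * (real m * log 2 (real n))" using d by linarith
  then have "real y * d / (10 * log 2 (real n)) \<le> 10 * (real m * log 2 (real n)) / (10 * log 2 (real n))"
    using L_pos by (intro divide_right_mono) simp_all
  also have "\<dots> = real m" using L_pos by simp
  finally show ?thesis .
qed

theorem lemma4p2:
  shows "\<exists>d0::real. \<forall>d\<ge>d0. \<forall>(V::nat set) (E::nat set set).
    simple_graph V E \<and> V \<noteq> {} \<and> average_degree V E = d \<longrightarrow>
    (\<exists>X Y E'. bipartite_subgraph V E X Y E' \<and> E' \<noteq> {} \<and>
       real (card E') \<ge> real (card X) * real (max_degree (X \<union> Y) E') / 80 \<and>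
       real (card E') \<ge> real (card Y) * d / (10 * log 2 (real (card V))))"
proof (rule exI[of _ 8], intro allI impI)
  fix d :: real and V :: "nat set" and E :: "nat set set"
  assume "8 \<le> d" and "simple_graph V E \<and> V \<noteq> {} \<and> average_degree V E = d"
  then have G: "simple_graph V E" and "V \<noteq> {}" and avg: "average_degree V E = d" by auto
  have n4: "4 \<le> card V" using average_degree_le_card[OF G \<open>V \<noteq> {}\<close>] avg \<open>8 \<le> d\<close> by linarith
  have d: "real (card V) * d = 2 * real (card E)" using avg n4 by (auto simp: average_degree_def)
  obtain A R where R: "R \<subseteq> cut_arcs E A" "finite R" "card E \<le> 2 * card R"
    "card R \<le> 2 * card (tail_heavy_arcs R)"
    using exists_tail_heavy_cut[OF G] .
  have "R \<noteq> {}" using R(3) d \<open>8 \<le> d\<close> n4 by auto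
  then obtain R' D where R': "R' \<subseteq> R" "\<And>x. out_degree R' x \<le> D" "\<And>y. in_degree R' y \<le> D"
    "card (Domain R') * D \<le> 80 * card R'" "3 * card R \<le> 10 * floorlog 16 (card V) * card R'"
    using tail_heavy_subrelation_bounded_degree R(2,4) out_degree_cut_arcs_le[OF G R(1)] by metis
  have "R' \<subseteq> cut_arcs E A" "R' \<noteq> {}" using R(1) R'(1,5) \<open>R \<noteq> {}\<close> R(2) by auto
  then obtain X Y E' where XY: "bipartite_subgraph V E X Y E'" "E' \<noteq> {}" "card E' = card R'"
    "card Y \<le> card V" "card X * max_degree (X \<union> Y) E' \<le> 80 * card E'"
    using bipartite_subgraph_of_cut_arcs[OF G _ _ R'(2-4)] by blast
  moreover have "real (card X) * real (max_degree (X \<union> Y) E') / 80 \<le> real (card E')"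
    using XY(5) by (simp flip: of_nat_mult)
  moreover have "real (card Y) * d / (10 * log 2 (real (card V))) \<le> real (card E')"
    using cut_density_bound[OF n4 XY(4) _ d R(3) R'(5)] \<open>8 \<le> d\<close> XY(3) by simp
  ultimately show "\<exists>X Y E'. bipartite_subgraph V E X Y E' \<and> E' \<noteq> {} \<and>
       real (card E') \<ge> real (card X) * real (max_degree (X \<union> Y) E') / 80 \<and>
       real (card E') \<ge> real (card Y) * d / (10 * log 2 (real (card V)))"
    by blast
qed

end
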